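(* Let $G=(V,E)$ be a finite undirected graph with $V \subset \mathbb{N}$, and let $\mathbf{p}=(p_e)_{e\in E}$ be any collection of probabilities $p_e\in[0,1]$. Let $\vec G(\mathbf{p})$ be the random orientation of $G$ in which each edge $e=\{x,y\}\in E$ with $x<y$ is oriented from $x$ to $y$ with probability $p_e$ and from $y$ to $x$ otherwise, independently over edges, with probability measure $\mathbb{P}_{G,\mathbf{p}}$. For a set $A\subset V$ and a vertex $y$, write $A\rightarrow y$ for the event that for some $x\in A$ there is a directed path from $x$ to $y$ in $\vec G(\mathbf{p})$. Then for any nonempty set $S\subset V$ and any vertices $a,b\in V$, \[\mathbb{P}_{G,\mathbf{p}}(S\rightarrow a \cap S\rightarrow b) \ge \mathbb{P}_{G,\mathbf{p}}(S\rightarrow a)\, \mathbb{P}_{G,\mathbf{p}}(S\rightarrow b).\]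
   Context: A directed path from $x$ to $x$ is taken to exist trivially (the path of length zero), so $S\rightarrow y$ always holds when $y\in S$. *)

theory Defs
  imports "HOL-Probability.Probability"
begin

definition fin_graph :: "nat set \<Rightarrow> nat set set \<Rightarrow> bool" where
  "fin_graph V E \<longleftrightarrow> finite V \<and> (\<forall>e\<in>E. e \<subseteq> V \<and> card e = 2)"

definition arcs :: "nat set set \<Rightarrow> (nat set \<Rightarrow> bool) \<Rightarrow> (nat \<times> nat) set" where
  "arcs E \<omega> = {(Min e, Max e) | e. e \<in> E \<and> \<omega> e} \<union> {(Max e, Min e) | e. e \<in> E \<and> \<not> \<omega> e}"

definition reaches :: "nat set set \<Rightarrow> (nat set \<Rightarrow> bool) \<Rightarrow> nat set \<Rightarrow> nat \<Rightarrow> bool" where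
  "reaches E \<omega> A y \<longleftrightarrow> (\<exists>x\<in>A. (x, y) \<in> (arcs E \<omega>)\<^sup>*)"

definition orient_pmf :: "nat set set \<Rightarrow> (nat set \<Rightarrow> real) \<Rightarrow> (nat set \<Rightarrow> bool) pmf" where
  "orient_pmf E p = Pi_pmf E False (\<lambda>e. bernoulli_pmf (p e))"

end

theory Submission
  imports Defs
begin

text \<open>Induction on the number of edges. If no edge joins S to its complement, S \<rightarrow> y just
  means y \<in> S and both events are deterministic. Otherwise pick such an edge {s, v} with s \<in> S.
  Pointing from s to v it merges v into the source set; pointing into S it is useless. So,
  conditionally on its orientation, both events become S' \<rightarrow> a and S' \<rightarrow> b in the remaining
  graph for the same S' \<in> {S, S \<union> {v}}, and are positively correlated by induction. Reachability
  is monotone in the source set, so both conditional probabilities are larger for S \<union> {v}, and a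
  mixture of positively correlated pairs with comonotone means is again positively correlated.\<close>

lemma prob_Pi_pmf_bernoulli_insert:
  assumes "finite A" "x \<notin> A" "0 \<le> q x" "q x \<le> 1"
  shows "measure_pmf.prob (Pi_pmf (insert x A) False (\<lambda>e. bernoulli_pmf (q e))) {w. Q w} =
    q x * measure_pmf.prob (Pi_pmf A False (\<lambda>e. bernoulli_pmf (q e))) {w. Q (w(x:=True))}
    + (1 - q x) * measure_pmf.prob (Pi_pmf A False (\<lambda>e. bernoulli_pmf (q e))) {w. Q (w(x:=False))}"
proof -
  let ?B = "\<lambda>e. bernoulli_pmf (q e)"
  let ?M = "\<lambda>y. map_pmf (\<lambda>f. f(x:=y)) (Pi_pmf A False ?B)"
  have Pi_eq: "Pi_pmf (insert x A) False ?B = bind_pmf (?B x) ?M"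
    by (simp add: Pi_pmf_insert'[OF assms(1,2)] map_pmf_def)
  have "measure_pmf.prob (bind_pmf (?B x) ?M) {w. Q w}
      = measure_pmf.expectation (?B x) (\<lambda>y. measure_pmf.prob (?M y) {w. Q w})"
    unfolding measure_pmf_bind
    by (rule measure_pmf.measure_bind[where N="count_space UNIV"])
      (simp_all add: measure_pmf_in_subprob_algebra)
  also have "\<dots> = measure_pmf.prob (?M True) {w. Q w} * q x
      + measure_pmf.prob (?M False) {w. Q w} * (1 - q x)"
    by (rule integral_bernoulli_pmf) (use assms in auto)
  also have "\<dots> = q x * measure_pmf.prob (Pi_pmf A False ?B) {w. Q (w(x:=True))}
      + (1 - q x) * measure_pmf.prob (Pi_pmf A False ?B) {w. Q (w(x:=False))}"
    by (simp only: measure_map_pmf vimage_Collect_eq mult.commute)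
  finally show ?thesis unfolding Pi_eq .
qed

lemma mixture_correlation:
  fixes q a0 a1 b0 b1 c0 c1 :: real
  assumes "0 \<le> q" "q \<le> 1" "a1 * b1 \<le> c1" "a0 * b0 \<le> c0" "0 \<le> (a1 - a0) * (b1 - b0)"
  shows "(q * a1 + (1 - q) * a0) * (q * b1 + (1 - q) * b0) \<le> q * c1 + (1 - q) * c0"
proof -
  have "q * (a1 * b1) + (1 - q) * (a0 * b0) \<le> q * c1 + (1 - q) * c0"
    using assms by (intro add_mono mult_left_mono) auto
  moreover have "q * (a1 * b1) + (1 - q) * (a0 * b0) - (q * a1 + (1 - q) * a0) * (q * b1 + (1 - q) * b0)
      = q * (1 - q) * ((a1 - a0) * (b1 - b0))"
    by (simp add: algebra_simps)
  moreover have "0 \<le> q * (1 - q) * ((a1 - a0) * (b1 - b0))"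
    using assms by simp
  ultimately show ?thesis by linarith
qed

lemma Image_rtrancl_insert_out: "s \<in> S \<Longrightarrow> (insert (s, v) R)\<^sup>* `` S = R\<^sup>* `` insert v S"
  by (auto simp: rtrancl_insert)

lemma Image_rtrancl_insert_in: "s \<in> S \<Longrightarrow> (insert (v, s) R)\<^sup>* `` S = R\<^sup>* `` S"
  by (auto simp: rtrancl_insert)

lemma reaches_iff_Image: "reaches E w A y \<longleftrightarrow> y \<in> (arcs E w)\<^sup>* `` A"
  by (auto simp: reaches_def)

lemma reaches_mono: "A \<subseteq> B \<Longrightarrow> reaches E w A y \<Longrightarrow> reaches E w B y"
  by (auto simp: reaches_def)

lemma arcs_insert:
  "arcs (insert e E) w = insert (if w e then (Min e, Max e) else (Max e, Min e)) (arcs E w)"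
  by (auto simp: arcs_def)

lemma arcs_fun_upd_notin: "e \<notin> E \<Longrightarrow> arcs E (w(e := y)) = arcs E w"
  unfolding arcs_def by (rule arg_cong2[where f="(\<union>)"]; auto)

lemma Min_Max_doubleton: "card e = 2 \<Longrightarrow> {Min e, Max e} = (e :: 'a :: linorder set)"
  by (auto simp: card_2_iff min_def max_def split: if_splits)

lemma arc_is_edge:
  assumes "\<forall>e\<in>E. card e = 2" "(x, z) \<in> arcs E w"
  shows "{x, z} \<in> E"
  using assms Min_Max_doubleton[where 'a = nat] unfolding arcs_def by (auto simp: insert_commute)

lemma reaches_insert_edge:
  assumes "s \<in> S" "s \<noteq> v"
  shows "reaches (insert {s, v} E) w S = reaches E w (if w {s, v} = (s < v) then insert v S else S)"
proof -
  have "(if w {s, v} then (Min {s, v}, Max {s, v}) else (Max {s, v}, Min {s, v}))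
      = (if w {s, v} = (s < v) then (s, v) else (v, s))"
    using assms(2) by (auto simp: min_def max_def)
  then show ?thesis
    using assms(1)
    by (auto simp: fun_eq_iff reaches_iff_Image arcs_insert Image_rtrancl_insert_out
        Image_rtrancl_insert_in)
qed

lemma reaches_no_edge_leaving:
  assumes "\<forall>e\<in>E. card e = 2" "\<not> (\<exists>s\<in>S. \<exists>v. v \<notin> S \<and> {s, v} \<in> E)"
  shows "reaches E w S y \<longleftrightarrow> y \<in> S"
proof -
  have "arcs E w `` S \<subseteq> S"
    using assms arc_is_edge by blast
  then show ?thesis
    by (simp add: reaches_iff_Image Image_closed_trancl)
qed

lemma prob_reaches_mono:
  "A \<subseteq> B \<Longrightarrow> measure_pmf.prob M {w. reaches E w A y} \<le> measure_pmf.prob M {w. reaches E w B y}"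
  by (rule measure_pmf.finite_measure_mono) (auto intro: reaches_mono)

lemma prob_orient_insert_edge:
  assumes "finite E" "{s, v} \<notin> E" "s \<in> S" "s \<noteq> v" "0 \<le> p {s, v}" "p {s, v} \<le> 1"
  shows "measure_pmf.prob (orient_pmf (insert {s, v} E) p) {w. P (reaches (insert {s, v} E) w S)}
    = p {s, v} * measure_pmf.prob (orient_pmf E p)
        {w. P (reaches E w (if s < v then insert v S else S))}
    + (1 - p {s, v}) * measure_pmf.prob (orient_pmf E p)
        {w. P (reaches E w (if s < v then S else insert v S))}"
proof -
  have "reaches (insert {s, v} E) (w({s, v} := y)) S
      = reaches E w (if y = (s < v) then insert v S else S)" for w y
    using reaches_insert_edge[OF assms(3,4), of E "w({s, v} := y)"]
    by (simp add: fun_eq_iff reaches_def arcs_fun_upd_notin[OF assms(2)])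
  then show ?thesis
    unfolding orient_pmf_def
    by (simp add: prob_Pi_pmf_bernoulli_insert[where q=p, OF assms(1,2,5,6)])
qed

lemma reaches_positively_correlated:
  assumes "finite E" "\<forall>e\<in>E. card e = 2" "\<forall>e\<in>E. 0 \<le> p e \<and> p e \<le> 1"
  shows "measure_pmf.prob (orient_pmf E p) {w. reaches E w S a}
           * measure_pmf.prob (orient_pmf E p) {w. reaches E w S b}
         \<le> measure_pmf.prob (orient_pmf E p) {w. reaches E w S a \<and> reaches E w S b}"
  using assms
proof (induction E arbitrary: S rule: finite_psubset_induct)
  case (psubset E)
  show ?case
  proof (cases "\<exists>s\<in>S. \<exists>v. v \<notin> S \<and> {s, v} \<in> E")
    case False
    then have "reaches E w S y \<longleftrightarrow> y \<in> S" for w y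
      using reaches_no_edge_leaving psubset.prems(1) by blast
    then show ?thesis by (cases "a \<in> S"; cases "b \<in> S") auto
  next
    case True
    then obtain s v where "s \<in> S" "v \<notin> S" and e: "{s, v} \<in> E" by blast
    define E' where "E' = E - {{s, v}}"
    have E': "E = insert {s, v} E'" "{s, v} \<notin> E'" "finite E'" "E' \<subset> E"
      using e psubset.hyps unfolding E'_def by auto
    have "s \<noteq> v" and pe: "0 \<le> p {s, v}" "p {s, v} \<le> 1"
      using psubset.prems(2) e \<open>s \<in> S\<close> \<open>v \<notin> S\<close> by auto
    note conditioned = prob_orient_insert_edge[where s=s and v=v and S=S and p=p,
        OF E'(3,2) \<open>s \<in> S\<close> \<open>s \<noteq> v\<close> pe, folded E'(1)]
    define S1 where "S1 = (if s < v then insert v S else S)"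
    define S0 where "S0 = (if s < v then S else insert v S)"
    let ?P = "\<lambda>y T. measure_pmf.prob (orient_pmf E' p) {w. reaches E' w T y}"
    have "\<forall>e\<in>E'. card e = 2" "\<forall>e\<in>E'. 0 \<le> p e \<and> p e \<le> 1"
      using psubset.prems E'(4) by auto
    note IH = psubset.IH[OF E'(4) this]
    have "0 \<le> (?P a S1 - ?P a S0) * (?P b S1 - ?P b S0)"
    proof (cases "s < v")
      case True
      then show ?thesis unfolding S0_def S1_def
        by (simp add: prob_reaches_mono subset_insertI)
    next
      case False
      then show ?thesis unfolding S0_def S1_def
        by (intro mult_nonpos_nonpos) (simp_all add: prob_reaches_mono subset_insertI)
    qed
    then show ?thesis
      using conditioned[of "\<lambda>r. r a"] conditioned[of "\<lambda>r. r b"]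
        conditioned[of "\<lambda>r. r a \<and> r b"] mixture_correlation[OF pe IH[of S1] IH[of S0]]
      unfolding S0_def S1_def by simp
  qed
qed

theorem theorem3:
  fixes V :: "nat set" and E :: "nat set set" and p :: "nat set \<Rightarrow> real"
    and S :: "nat set" and a b :: nat
  assumes "fin_graph V E"
    and "\<forall>e\<in>E. 0 \<le> p e \<and> p e \<le> 1"
    and "S \<subseteq> V" and "S \<noteq> {}"
    and "a \<in> V" and "b \<in> V"
  shows "measure_pmf.prob (orient_pmf E p) {\<omega>. reaches E \<omega> S a \<and> reaches E \<omega> S b}
         \<ge> measure_pmf.prob (orient_pmf E p) {\<omega>. reaches E \<omega> S a}
           * measure_pmf.prob (orient_pmf E p) {\<omega>. reaches E \<omega> S b}"
proof -
  have "finite V" "E \<subseteq> Pow V" "\<forall>e\<in>E. card e = 2"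
    using assms(1) unfolding fin_graph_def by auto
  then have "finite E"
    by (meson finite_Pow_iff finite_subset)
  then show ?thesis
    using reaches_positively_correlated \<open>\<forall>e\<in>E. card e = 2\<close> assms(2) by blast
qed

end
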